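(* Let $n$ be a positive integer and let $A\subseteq\mathbb{Z}/n\mathbb{Z}$ be a basis of $\mathbb{Z}/n\mathbb{Z}$. Then $|A|\cdot\rho(A)<2n$.
   Context: A subset $A\subseteq\mathbb{Z}/n\mathbb{Z}$ is a basis if $hA=\mathbb{Z}/n\mathbb{Z}$ for some positive integer $h$, where $hA=\{a_1+\dots+a_h: a_i\in A\}$; the least such $h$ is denoted $\rho(A)$. *)

theory Defs
  imports Main
begin

text \<open>Z/nZ is modelled as the residues {0..<n} of nat with addition modulo n.
  sumset n h A = hA = {a_1 + ... + a_h mod n : a_i in A}.\<close>

fun sumset :: "nat \<Rightarrow> nat \<Rightarrow> nat set \<Rightarrow> nat set" where
  "sumset n 0 A = {0}"
| "sumset n (Suc h) A = {(x + a) mod n | x a. x \<in> sumset n h A \<and> a \<in> A}"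

definition is_basis :: "nat \<Rightarrow> nat set \<Rightarrow> bool" where
  "is_basis n A \<longleftrightarrow> A \<subseteq> {0..<n} \<and> (\<exists>h>0. sumset n h A = {0..<n})"

definition rho :: "nat \<Rightarrow> nat set \<Rightarrow> nat" where
  "rho n A = (LEAST h. h > 0 \<and> sumset n h A = {0..<n})"

end

theory Submission
  imports Defs "HOL-Number_Theory.Cong"
begin

(* The engine is Scherk's theorem for Z/nZ: if some element p0 + q0 of P + Q has a
   unique representation as a sum from P x Q, then |P + Q| >= |P| + |Q| - 1.
   It is proved by induction on |Q| via Dyson's e-transform
   (P, Q) |-> (P u (e + Q), {q in Q. e + q in P}), which preserves |P| + |Q|,
   shrinks the sumset, and preserves the unique representation.

   Translating A by a constant translates every kA by a constant, so |A|,
   rho(A) and the basis property are unchanged; hence we may assume 0 in A.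
   Then 0A <= 1A <= 2A <= ... strictly increases up to rho(A), and Scherk's
   theorem applied to (jA + one new element, A) gives |(j+2)A| >= |jA| + |A|
   for j + 1 < rho(A).  Iterating two steps at a time yields k|A| < 2|kA| for
   all k <= rho(A); taking k = rho(A), where |kA| = n, proves the theorem. *)

section \<open>Sums and translates of residue sets\<close>

definition add_sets :: "nat \<Rightarrow> nat set \<Rightarrow> nat set \<Rightarrow> nat set" where
  "add_sets n P Q = {(p + q) mod n | p q. p \<in> P \<and> q \<in> Q}"

definition translate :: "nat \<Rightarrow> nat \<Rightarrow> nat set \<Rightarrow> nat set" where
  "translate n t X = (\<lambda>x. (x + t) mod n) ` X"

lemma sumset_Suc_add_sets: "sumset n (Suc h) A = add_sets n (sumset n h A) A"
  by (simp add: add_sets_def)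

lemma add_sets_subset: "0 < n \<Longrightarrow> add_sets n P Q \<subseteq> {0..<n}"
  by (auto simp: add_sets_def)

lemma add_sets_singleton: "add_sets n P {q} = translate n q P"
  by (auto simp: add_sets_def translate_def)

lemma inj_on_translate: "inj_on (\<lambda>x. (x + t) mod n) {0..<(n::nat)}"
proof (rule inj_onI)
  fix x y assume "x \<in> {0..<n}" "y \<in> {0..<n}" "(x + t) mod n = (y + t) mod n"
  then show "x = y"
    by (metis atLeastLessThan_iff cong_add_rcancel_nat cong_def cong_less_modulus_unique_nat)
qed

lemma card_translate:
  assumes "X \<subseteq> {0..<n}"
  shows "card (translate n t X) = card X"
  unfolding translate_def using inj_on_subset[OF inj_on_translate assms] by (rule card_image)

lemma translate_subset: "0 < n \<Longrightarrow> translate n t X \<subseteq> {0..<n}"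
  by (auto simp: translate_def)

lemma translate_closed_eq:
  assumes "X \<subseteq> {0..<n}" and "translate n t X \<subseteq> X"
  shows "translate n t X = X"
  using assms unfolding translate_def
  by (intro endo_inj_surj) (auto intro: finite_subset inj_on_subset[OF inj_on_translate])

lemma translate_eq_full_iff:
  assumes "0 < n" and "X \<subseteq> {0..<n}"
  shows "translate n t X = {0..<n} \<longleftrightarrow> X = {0..<n}"
proof -
  have "card (translate n t X) = card X" using card_translate[OF assms(2)] .
  then show ?thesis
    using translate_subset[OF assms(1)] assms(2)
    by (metis card_subset_eq finite_atLeastLessThan)
qed

lemma add_sets_translate:
  "add_sets n (translate n s P) (translate n t Q) = translate n (s + t) (add_sets n P Q)"
proof -
  have shift: "((p + s) mod n + (q + t) mod n) mod n = ((p + q) mod n + (s + t)) mod n"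
    for p q :: nat
  proof -
    have "((p + s) mod n + (q + t) mod n) mod n = ((p + q) + (s + t)) mod n"
      unfolding mod_add_eq by (simp add: ac_simps)
    then show ?thesis by (simp only: mod_add_left_eq)
  qed
  show ?thesis
  proof (intro equalityI subsetI)
    fix x assume "x \<in> add_sets n (translate n s P) (translate n t Q)"
    then obtain p q where pq: "p \<in> P" "q \<in> Q" "x = ((p + s) mod n + (q + t) mod n) mod n"
      unfolding add_sets_def translate_def by blast
    then have "x = ((p + q) mod n + (s + t)) mod n" by (simp only: shift)
    then show "x \<in> translate n (s + t) (add_sets n P Q)"
      using pq(1,2) unfolding add_sets_def translate_def by blast
  next
    fix x assume "x \<in> translate n (s + t) (add_sets n P Q)"
    then obtain p q where pq: "p \<in> P" "q \<in> Q" "x = ((p + q) mod n + (s + t)) mod n"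
      unfolding add_sets_def translate_def by blast
    then have "x = ((p + s) mod n + (q + t) mod n) mod n" by (simp only: shift)
    then show "x \<in> add_sets n (translate n s P) (translate n t Q)"
      using pq(1,2) unfolding add_sets_def translate_def by blast
  qed
qed

section \<open>Scherk's theorem\<close>

definition unique_rep :: "nat \<Rightarrow> nat set \<Rightarrow> nat set \<Rightarrow> nat \<Rightarrow> nat \<Rightarrow> bool" where
  "unique_rep n P Q p0 q0 \<longleftrightarrow> p0 \<in> P \<and> q0 \<in> Q \<and>
     (\<forall>p\<in>P. \<forall>q\<in>Q. (p + q) mod n = (p0 + q0) mod n \<longrightarrow> p = p0 \<and> q = q0)"

definition dyson_P :: "nat \<Rightarrow> nat \<Rightarrow> nat set \<Rightarrow> nat set \<Rightarrow> nat set" where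
  "dyson_P n e P Q = P \<union> translate n e Q"

definition dyson_Q :: "nat \<Rightarrow> nat \<Rightarrow> nat set \<Rightarrow> nat set \<Rightarrow> nat set" where
  "dyson_Q n e P Q = {q \<in> Q. (q + e) mod n \<in> P}"

text \<open>The e-transform preserves |P| + |Q|: the new part of P is in bijection
  with the removed part of Q.\<close>
lemma dyson_card:
  assumes "P \<subseteq> {0..<n}" and "Q \<subseteq> {0..<n}"
  shows "card (dyson_P n e P Q) + card (dyson_Q n e P Q) = card P + card Q"
proof -
  have fin: "finite P" "finite Q" using assms finite_subset by blast+
  have meet: "P \<inter> translate n e Q = translate n e (dyson_Q n e P Q)"
    by (auto simp: translate_def dyson_Q_def)
  have "card (P \<inter> translate n e Q) = card (dyson_Q n e P Q)"
    unfolding meet using assms(2) by (intro card_translate) (auto simp: dyson_Q_def)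
  moreover have "card (translate n e Q) = card Q" using card_translate[OF assms(2)] .
  ultimately show ?thesis
    using card_Un_Int[OF fin(1), of "translate n e Q"] fin
    unfolding dyson_P_def by (simp add: translate_def)
qed

lemma translate_sum_swap: "((a + e) mod n + b) mod n = ((b + e) mod (n::nat) + a) mod n"
  by (metis add.assoc add.commute mod_add_left_eq)

lemma dyson_add_sets_subset:
  "add_sets n (dyson_P n e P Q) (dyson_Q n e P Q) \<subseteq> add_sets n P Q"
proof
  fix x assume "x \<in> add_sets n (dyson_P n e P Q) (dyson_Q n e P Q)"
  then obtain p q where x: "x = (p + q) mod n" and p: "p \<in> dyson_P n e P Q"
    and q: "q \<in> Q" "(q + e) mod n \<in> P"
    by (auto simp: add_sets_def dyson_Q_def)
  show "x \<in> add_sets n P Q"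
  proof (cases "p \<in> P")
    case True
    then show ?thesis using x q by (auto simp: add_sets_def)
  next
    case False
    then obtain q' where q': "q' \<in> Q" "p = (q' + e) mod n"
      using p by (auto simp: dyson_P_def translate_def)
    have "x = ((q + e) mod n + q') mod n" using x q' translate_sum_swap by simp
    then show ?thesis using q q' unfolding add_sets_def by blast
  qed
qed

lemma dyson_unique_rep:
  assumes uniq: "unique_rep n P Q p0 q0" and e: "(q0 + e) mod n \<in> P"
  shows "unique_rep n (dyson_P n e P Q) (dyson_Q n e P Q) p0 q0"
proof -
  have "p0 \<in> dyson_P n e P Q" "q0 \<in> dyson_Q n e P Q"
    using uniq e by (auto simp: unique_rep_def dyson_P_def dyson_Q_def)
  moreover have "p = p0 \<and> q = q0"
    if p: "p \<in> dyson_P n e P Q" and "q \<in> dyson_Q n e P Q"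
      and sum: "(p + q) mod n = (p0 + q0) mod n" for p q
  proof -
    from that have q: "q \<in> Q" "(q + e) mod n \<in> P" by (auto simp: dyson_Q_def)
    have "p \<in> P"
    proof (rule ccontr)
      assume "p \<notin> P"
      then obtain q' where q': "q' \<in> Q" "p = (q' + e) mod n"
        using p by (auto simp: dyson_P_def translate_def)
      have "((q + e) mod n + q') mod n = (p0 + q0) mod n"
        using sum q' translate_sum_swap by metis
      then have "q' = q0" using uniq q q'(1) by (auto simp: unique_rep_def)
      then show False using \<open>p \<notin> P\<close> q' e by simp
    qed
    then show "p = p0 \<and> q = q0" using uniq q sum by (auto simp: unique_rep_def)
  qed
  ultimately show ?thesis by (simp add: unique_rep_def)
qed

text \<open>Unless Q is a singleton, some translate of Q meets P at the image of q0
  without being contained in P; otherwise P would be invariant under the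
  translation by q1 - q0 and p0 + q0 would also be represented with q1.\<close>
lemma exists_escaping_translate:
  assumes P: "P \<subseteq> {0..<n}" and Q: "Q \<subseteq> {0..<n}" and uniq: "unique_rep n P Q p0 q0"
    and q1: "q1 \<in> Q" "q1 \<noteq> q0"
  shows "\<exists>e. (q0 + e) mod n \<in> P \<and> \<not> translate n e Q \<subseteq> P"
proof (rule ccontr)
  assume "\<not> ?thesis"
  then have closed: "(q0 + e) mod n \<in> P \<Longrightarrow> (q + e) mod n \<in> P" if "q \<in> Q" for e q
    using that by (auto simp: translate_def)
  have q0n: "q0 < n" using uniq Q by (auto simp: unique_rep_def)
  define d where "d = n - q0 + q1"
  have "(p + d) mod n \<in> P" if "p \<in> P" for p
  proof -
    have "(q0 + (p + (n - q0))) mod n = p" using q0n P that by auto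
    then have "(q1 + (p + (n - q0))) mod n \<in> P" using closed[OF q1(1)] that by simp
    then show ?thesis by (simp add: d_def algebra_simps)
  qed
  then have "translate n d P \<subseteq> P" by (auto simp: translate_def)
  then have "translate n d P = P" by (rule translate_closed_eq[OF P])
  then have "p0 \<in> translate n d P" using uniq by (simp add: unique_rep_def)
  then obtain p' where p': "p' \<in> P" "(p' + d) mod n = p0" by (auto simp: translate_def)
  have "p' + d + q0 = p' + q1 + n" using q0n by (simp add: d_def)
  then have "(p' + q1) mod n = ((p' + d) + q0) mod n" by (metis mod_add_self2)
  also have "\<dots> = (p0 + q0) mod n" using p'(2) by (metis mod_add_left_eq)
  finally show False using uniq p'(1) q1 by (auto simp: unique_rep_def)
qed

text \<open>Scherk's theorem: a uniquely represented element forces |P + Q| >= |P| + |Q| - 1.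
  Induction on |Q|; a non-singleton Q is replaced by the smaller dyson_Q.\<close>
theorem scherk:
  assumes "P \<subseteq> {0..<n}" and "Q \<subseteq> {0..<n}" and "unique_rep n P Q p0 q0"
  shows "card P + card Q \<le> card (add_sets n P Q) + 1"
  using assms
proof (induction "card Q" arbitrary: P Q rule: less_induct)
  case (less Q P)
  have q0: "q0 \<in> Q" using less.prems(3) by (simp add: unique_rep_def)
  then have n0: "0 < n" using less.prems(2) by fastforce
  show ?case
  proof (cases "Q = {q0}")
    case True
    then show ?thesis
      using card_translate[OF less.prems(1)] by (simp add: add_sets_singleton)
  next
    case False
    then obtain q1 where q1: "q1 \<in> Q" "q1 \<noteq> q0" using q0 by blast
    obtain e where e: "(q0 + e) mod n \<in> P" and escape: "\<not> translate n e Q \<subseteq> P"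
      using exists_escaping_translate[OF less.prems q1] by blast
    let ?P' = "dyson_P n e P Q" and ?Q' = "dyson_Q n e P Q"
    have "?Q' \<subseteq> Q" "?Q' \<noteq> Q"
      using escape by (auto simp: dyson_Q_def translate_def)
    then have smaller: "card ?Q' < card Q"
      using psubset_card_mono[OF finite_subset[OF less.prems(2)]] by blast
    have P': "?P' \<subseteq> {0..<n}"
      using less.prems(1) translate_subset[OF n0] by (auto simp: dyson_P_def)
    have Q': "?Q' \<subseteq> {0..<n}" using less.prems(2) by (auto simp: dyson_Q_def)
    have "card ?P' + card ?Q' \<le> card (add_sets n ?P' ?Q') + 1"
      using less.hyps[OF smaller P' Q' dyson_unique_rep[OF less.prems(3) e]] .
    moreover have "card (add_sets n ?P' ?Q') \<le> card (add_sets n P Q)"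
      using card_mono[OF finite_subset[OF add_sets_subset[OF n0]] dyson_add_sets_subset] by simp
    ultimately show ?thesis using dyson_card[OF less.prems(1,2), of e] by linarith
  qed
qed

section \<open>Iterated sumsets\<close>

lemma sumset_subset: "0 < n \<Longrightarrow> sumset n k A \<subseteq> {0..<n}"
  by (cases k) auto

lemma finite_sumset: "0 < n \<Longrightarrow> finite (sumset n k A)"
  using finite_subset[OF sumset_subset] by blast

lemma sumset_one: "A \<subseteq> {0..<n} \<Longrightarrow> sumset n 1 A = A"
  by force

lemma sumset_translate: "sumset n k (translate n t A) = translate n (k * t) (sumset n k A)"
proof (induction k)
  case 0
  then show ?case by (simp add: translate_def)
next
  case (Suc k)
  then show ?case by (simp only: sumset_Suc_add_sets add_sets_translate mult_Suc add.commute)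
qed

lemma sumset_SucI: "x \<in> sumset n k A \<Longrightarrow> a \<in> A \<Longrightarrow> (x + a) mod n \<in> sumset n (Suc k) A"
  by auto

lemma add_sets_mono: "P \<subseteq> P' \<Longrightarrow> add_sets n P Q \<subseteq> add_sets n P' Q"
  unfolding add_sets_def by blast

lemma sumset_mono_Suc:
  assumes "0 < n" and "0 \<in> A"
  shows "sumset n k A \<subseteq> sumset n (Suc k) A"
proof
  fix x assume x: "x \<in> sumset n k A"
  then have "x < n" using sumset_subset[OF assms(1), of k A] by auto
  then have "x = (x + 0) mod n" by simp
  then show "x \<in> sumset n (Suc k) A" using sumset_SucI[OF x assms(2)] by simp
qed

lemma sumset_stable:
  assumes "sumset n (Suc k) A = sumset n k A"
  shows "sumset n (k + j) A = sumset n k A"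
proof (induction j)
  case (Suc j)
  then show ?case using assms by (simp add: sumset_Suc_add_sets)
qed simp

text \<open>Key growth step: when the chain still grows from (j+1)A to (j+2)A, Scherk's
  theorem, applied to jA plus one element y0 of (j+1)A - jA, gains |A| in two steps.\<close>
lemma sumset_growth:
  assumes n0: "0 < n" and A: "A \<subseteq> {0..<n}" and A0: "0 \<in> A"
    and grows: "sumset n (Suc (Suc j)) A \<noteq> sumset n (Suc j) A"
  shows "card (sumset n j A) + card A \<le> card (sumset n (Suc (Suc j)) A)"
proof -
  let ?T = "\<lambda>k. sumset n k A"
  obtain u where u: "u \<in> ?T (Suc (Suc j))" "u \<notin> ?T (Suc j)"
    using grows sumset_mono_Suc[OF n0 A0] by blast
  then obtain y0 a0 where ya: "u = (y0 + a0) mod n" "y0 \<in> ?T (Suc j)" "a0 \<in> A"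
    by auto
  have old_sums: "(p + q) mod n \<noteq> u" if "p \<in> ?T j" "q \<in> A" for p q
    using sumset_SucI[OF that] u(2) by auto
  have y0_new: "y0 \<notin> ?T j" using old_sums ya(1,3) by blast
  define Y where "Y = insert y0 (?T j)"
  have Y_sub: "Y \<subseteq> ?T (Suc j)" using ya(2) sumset_mono_Suc[OF n0 A0, of j] by (simp add: Y_def)
  then have Y: "Y \<subseteq> {0..<n}" using sumset_subset[OF n0] by blast
  have "p = y0 \<and> q = a0"
    if p: "p \<in> Y" and q: "q \<in> A" and sum: "(p + q) mod n = (y0 + a0) mod n" for p q
  proof -
    have "p = y0" using old_sums[of p q] p q sum ya(1) by (auto simp: Y_def)
    then have "(q + y0) mod n = (a0 + y0) mod n" using sum by (simp add: add.commute)
    then have "q = a0" using inj_on_translate[of y0 n] q ya(3) A unfolding inj_on_def by blast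
    then show ?thesis using \<open>p = y0\<close> by simp
  qed
  then have "unique_rep n Y A y0 a0" using ya(3) by (simp add: unique_rep_def Y_def)
  then have "card Y + card A \<le> card (add_sets n Y A) + 1" using scherk[OF Y A] by blast
  moreover have "add_sets n Y A \<subseteq> ?T (Suc (Suc j))"
    unfolding sumset_Suc_add_sets[of n "Suc j"] by (rule add_sets_mono[OF Y_sub])
  then have "card (add_sets n Y A) \<le> card (?T (Suc (Suc j)))"
    using card_mono finite_sumset[OF n0] by blast
  moreover have "card Y = card (?T j) + 1" using y0_new finite_sumset[OF n0] by (simp add: Y_def)
  ultimately show ?thesis by linarith
qed

section \<open>The bound for bases containing 0\<close>

lemma rho_spec:
  assumes "\<exists>h>0. sumset n h A = {0..<n}"
  shows "sumset n (rho n A) A = {0..<n}"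
  using LeastI_ex[OF assms] unfolding rho_def by auto

lemma sumset_grows_before_rho:
  assumes ex: "\<exists>h>0. sumset n h A = {0..<n}" and j: "Suc j < rho n A"
  shows "sumset n (Suc (Suc j)) A \<noteq> sumset n (Suc j) A"
proof
  assume "sumset n (Suc (Suc j)) A = sumset n (Suc j) A"
  then have "sumset n (Suc j + (rho n A - Suc j)) A = sumset n (Suc j) A"
    by (rule sumset_stable)
  then have "sumset n (Suc j) A = {0..<n}" using j rho_spec[OF ex] by simp
  moreover have "\<not> (0 < Suc j \<and> sumset n (Suc j) A = {0..<n})"
    using j unfolding rho_def by (rule not_less_Least)
  ultimately show False by simp
qed

lemma card_sumset_lower_bound:
  assumes n0: "0 < n" and A: "A \<subseteq> {0..<n}" and A0: "0 \<in> A"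
    and ex: "\<exists>h>0. sumset n h A = {0..<n}"
  shows "k \<le> rho n A \<Longrightarrow> k * card A < 2 * card (sumset n k A)"
proof (induction k rule: nat_induct2)
  case 1
  have "finite A" using A finite_subset by blast
  then have "card A > 0" using A0 card_gt_0_iff by blast
  then show ?case using sumset_one[OF A] by simp
next
  case (step k)
  then have IH: "k * card A < 2 * card (sumset n k A)" by simp
  have "sumset n (Suc (Suc k)) A \<noteq> sumset n (Suc k) A"
    using sumset_grows_before_rho[OF ex, of k] step.prems by simp
  then have "card (sumset n k A) + card A \<le> card (sumset n (Suc (Suc k)) A)"
    by (rule sumset_growth[OF n0 A A0])
  moreover have "(k + 2) * card A = k * card A + 2 * card A" by (simp add: algebra_simps)
  ultimately show ?case using IH by (simp add: numeral_2_eq_2)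
qed simp

text \<open>Translating A preserves the basis property, rho(A) and |A|, since every
  kA is only translated.\<close>
lemma translate_basis_invariants:
  assumes n0: "0 < n" and A: "A \<subseteq> {0..<n}"
  shows "(\<exists>h>0. sumset n h (translate n t A) = {0..<n}) \<longleftrightarrow> (\<exists>h>0. sumset n h A = {0..<n})"
    and "rho n (translate n t A) = rho n A"
    and "card (translate n t A) = card A"
proof -
  have full_iff: "sumset n k (translate n t A) = {0..<n} \<longleftrightarrow> sumset n k A = {0..<n}" for k
    using translate_eq_full_iff[OF n0 sumset_subset[OF n0]] by (simp add: sumset_translate)
  show "(\<exists>h>0. sumset n h (translate n t A) = {0..<n}) \<longleftrightarrow> (\<exists>h>0. sumset n h A = {0..<n})"
    by (simp only: full_iff)
  show "rho n (translate n t A) = rho n A" unfolding rho_def by (simp only: full_iff)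
  show "card (translate n t A) = card A" using card_translate[OF A] .
qed

text \<open>A basis is nonempty, because hA is empty for h > 0 and empty A.\<close>
lemma basis_nonempty:
  assumes "0 < n" and "\<exists>h>0. sumset n h A = {0..<n}"
  shows "A \<noteq> {}"
proof
  assume "A = {}"
  obtain h where "0 < h" "sumset n h A = {0..<n}" using assms(2) by blast
  then obtain k where "sumset n (Suc k) A = {0..<n}" using gr0_conv_Suc by auto
  then show False using \<open>A = {}\<close> assms(1) by simp
qed

lemma zero_in_translate:
  assumes "a \<in> A" and "A \<subseteq> {0..<n}"
  shows "0 \<in> translate n (n - a) A"
proof -
  have "(a + (n - a)) mod n \<in> translate n (n - a) A"
    unfolding translate_def using assms(1) by (rule imageI)
  then show ?thesis using assms by auto
qed

theorem mainTheorem5: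
  fixes n :: nat and A :: "nat set"
  assumes "n > 0" and "is_basis n A"
  shows "card A * rho n A < 2 * n"
proof -
  have A: "A \<subseteq> {0..<n}" and ex: "\<exists>h>0. sumset n h A = {0..<n}"
    using assms(2) unfolding is_basis_def by auto
  obtain a where a: "a \<in> A" using basis_nonempty[OF assms(1) ex] by blast
  define A' where "A' = translate n (n - a) A"
  have A': "A' \<subseteq> {0..<n}" and A'0: "0 \<in> A'"
    using translate_subset[OF assms(1)] zero_in_translate[OF a A] by (simp_all add: A'_def)
  have ex': "\<exists>h>0. sumset n h A' = {0..<n}"
    using ex translate_basis_invariants(1)[OF assms(1) A] by (simp add: A'_def)
  have "rho n A' * card A' < 2 * card (sumset n (rho n A') A')"
    by (rule card_sumset_lower_bound[OF assms(1) A' A'0 ex' order_refl])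
  then show ?thesis
    using rho_spec[OF ex'] translate_basis_invariants(2,3)[OF assms(1) A]
    by (simp add: A'_def mult.commute)
qed

end
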